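(* Let $n=6$ and let $v_1,\dots,v_m$ be linearly independent vectors of the set $\{e_i+e_j+e_k\mid 1\le i<j<k\le 6\}$. Then $$\mathbb Z(v_1,\dots,v_m)=\mathbb Q(v_1,\dots,v_m)\cap \mathbb Z_{\equiv 0(3)}(e_1,\dots,e_6),$$ where $\mathbb Q(v_1,\dots,v_m)$ is the rational linear span of $v_1,\dots,v_m$ and $\mathbb Z_{\equiv 0(3)}(e_1,\dots,e_6)=\{\sum x_ie_i\mid x_i\in\mathbb Z,\ \sum x_i\equiv 0\pmod 3\}$.
   Context: Notation: $\varepsilon_1,\dots,\varepsilon_n$ is the standard basis of $\mathbb Q^n$ and $e_i=\varepsilon_i-\frac1n(1,\dots,1)$, so the $e_i$ satisfy the single linear relation $e_1+\dots+e_n=0$. $\mathbb Z(v_1,\dots,v_m)$ denotes the set of integer linear combinations of the $v_i$. *)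

theory Defs
  imports Complex_Main
begin

text \<open>Vectors of Q^6 are represented as functions nat => rat, coordinates 1..6,
  value 0 outside {1..6}.\<close>

definition eps :: "nat \<Rightarrow> nat \<Rightarrow> rat" where
  "eps i = (\<lambda>k. if 1 \<le> k \<and> k \<le> 6 then (if k = i then 1 else 0) - 1/6 else 0)"

definition triples :: "(nat \<Rightarrow> rat) set" where
  "triples = {(\<lambda>x. eps i x + eps j x + eps k x) | i j k.
                 1 \<le> i \<and> i < j \<and> j < k \<and> k \<le> 6}"

definition lincomb :: "(nat \<Rightarrow> rat) \<Rightarrow> (nat \<Rightarrow> nat \<Rightarrow> rat) \<Rightarrow> nat \<Rightarrow> nat \<Rightarrow> rat" where
  "lincomb c v m = (\<lambda>x. \<Sum>j<m. c j * v j x)"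

definition lin_indep :: "(nat \<Rightarrow> nat \<Rightarrow> rat) \<Rightarrow> nat \<Rightarrow> bool" where
  "lin_indep v m \<longleftrightarrow> (\<forall>c. lincomb c v m = (\<lambda>x. 0) \<longrightarrow> (\<forall>j<m. c j = 0))"

definition int_span :: "(nat \<Rightarrow> nat \<Rightarrow> rat) \<Rightarrow> nat \<Rightarrow> (nat \<Rightarrow> rat) set" where
  "int_span v m = {lincomb (\<lambda>j. of_int (c j)) v m | c :: nat \<Rightarrow> int. True}"

definition rat_span :: "(nat \<Rightarrow> nat \<Rightarrow> rat) \<Rightarrow> nat \<Rightarrow> (nat \<Rightarrow> rat) set" where
  "rat_span v m = {lincomb c v m | c. True}"

definition Z3 :: "(nat \<Rightarrow> rat) set" where
  "Z3 = {(\<lambda>x. \<Sum>i\<in>{1..6}. of_int (a i) * eps i x) | a :: nat \<Rightarrow> int.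
            (\<Sum>i\<in>{1..6}. a i) mod 3 = 0}"

end

theory Submission
  imports Defs
begin

(*
  In coordinates, e_p + e_q + e_r has entry 1/2 on T = {p,q,r} and -1/2 elsewhere, and x lies
  in Z3 iff its entries sum to 0, 2 x_6 is an integer and every x_a + x_6 (a = 1..5) is an
  integer.  The map x |-> (x_a + x_6)_a sends the vector of T to +-(indicator of an edge of the
  complete graph on {1..5}): T - {6} if 6 is in T, and {1..5} - T otherwise.  Hence a rational
  combination lying in Z3 yields rational weights on an independent set of edges of a graph
  with five vertices, with integral vertex sums and integral total weight.

  In the subgraph H of edges with
  non-integral weight no vertex has degree one; an even closed trail in H is a linear
  dependence, and an odd cycle that is all of H forces an integral weight.  A walk in H on at
  most five vertices always runs into one of these situations, so H is empty.
*)

section \<open>Closed walks\<close>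

definition cyc_edge :: "'v list \<Rightarrow> nat \<Rightarrow> 'v set" where
  "cyc_edge w i = {w ! i, w ! (Suc i mod length w)}"

lemma cyc_edge_inj:
  assumes "distinct w" "3 \<le> length w"
  shows "inj_on (cyc_edge w) {..<length w}"
proof
  fix i k assume i: "i \<in> {..<length w}" and k: "k \<in> {..<length w}"
    and eq: "cyc_edge w i = cyc_edge w k"
  have lt: "Suc j mod length w < length w" for j
    by (rule mod_less_divisor) (use assms(2) in auto)
  from eq have "(i = k \<and> Suc i mod length w = Suc k mod length w) \<or>
      (i = Suc k mod length w \<and> Suc i mod length w = k)"
    using i k lt by (auto simp: cyc_edge_def doubleton_eq_iff nth_eq_iff_index_eq[OF assms(1)])
  then show "i = k" using i k assms(2) by (auto simp: mod_Suc split: if_splits)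
qed

lemma cyc_edge_mem:
  assumes "distinct w" "i < length w" "t < length w"
  shows "w ! (Suc t mod length w) \<in> cyc_edge w i \<longleftrightarrow> i = t \<or> i = Suc t mod length w"
proof -
  have lt: "Suc j mod length w < length w" for j
    by (rule mod_less_divisor) (use assms(2) in auto)
  have "Suc t mod length w = Suc i mod length w \<longleftrightarrow> i = t"
    using assms(2,3) by (auto simp: mod_Suc split: if_splits)
  then show ?thesis using assms lt by (auto simp: cyc_edge_def nth_eq_iff_index_eq)
qed

lemma alternating_sum_rotate:
  fixes f :: "nat \<Rightarrow> 'a::comm_ring_1"
  assumes "even n"
  shows "(\<Sum>i<n. (-1)^i * f (Suc i mod n)) = - (\<Sum>i<n. (-1)^i * f i)"
proof (cases n)
  case (Suc m)
  with assms have m: "odd m" by simp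
  have "(\<Sum>i<n. (-1)^i * f (Suc i mod n)) = (\<Sum>i<m. (-1)^i * f (Suc i)) - f 0"
    using Suc m by (simp add: mod_Suc)
  moreover have "(\<Sum>i<n. (-1)^i * f i) = f 0 - (\<Sum>i<m. (-1)^i * f (Suc i))"
    unfolding Suc sum.lessThan_Suc_shift by (simp add: sum_negf)
  ultimately show ?thesis by simp
qed simp

lemma sum_odd_pairs:
  fixes f :: "nat \<Rightarrow> 'a::comm_monoid_add"
  shows "(\<Sum>i<2*k+1. f i) = f 0 + (\<Sum>t<k. f (2*t+1) + f (2*t+2))"
  by (induction k) (simp_all add: add_ac)

lemma odd_cycle_integral:
  fixes \<delta> :: "nat \<Rightarrow> 'a::ring_1"
  assumes n: "n = 2 * k + 1" and total: "(\<Sum>i<n. \<delta> i) \<in> \<int>"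
    and pairs: "\<And>t. t < n \<Longrightarrow> \<delta> t + \<delta> (Suc t mod n) \<in> \<int>"
  shows "\<delta> 0 \<in> \<int>"
proof -
  have "(\<Sum>t<k. \<delta> (2 * t + 1) + \<delta> (2 * t + 2)) \<in> \<int>"
  proof (rule Ints_sum)
    fix t assume "t \<in> {..<k}"
    then have "2 * t + 1 < n" "Suc (2 * t + 1) mod n = 2 * t + 2" using n by auto
    then show "\<delta> (2 * t + 1) + \<delta> (2 * t + 2) \<in> \<int>" using pairs by metis
  qed
  with total show ?thesis using sum_odd_pairs[of \<delta> k] n by (metis Ints_diff add_diff_cancel_right')
qed

section \<open>Integral weights on independent edge sets of small graphs\<close>

locale small_indep_graph =
  fixes V :: "'v set" and J :: "'j set" and E :: "'j \<Rightarrow> 'v set"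
  assumes finite_J: "finite J"
    and finite_V: "finite V"
    and card_V: "card V \<le> 5"
    and edge: "j \<in> J \<Longrightarrow> E j \<subseteq> V \<and> card (E j) = 2"
    and indep: "\<And>d :: 'j \<Rightarrow> rat.
      \<forall>a\<in>V. (\<Sum>j\<in>J. if a \<in> E j then d j else 0) = 0 \<Longrightarrow> \<forall>j\<in>J. d j = 0"
begin

lemma pigeonhole:
  assumes "distinct xs" and "set xs \<subseteq> V" shows "length xs \<le> 5"
proof -
  have "length xs = card (set xs)" using distinct_card[OF assms(1)] by simp
  also have "\<dots> \<le> card V" by (rule card_mono[OF finite_V assms(2)])
  finally show ?thesis using card_V by simp
qed

lemma five_vertices:
  assumes "distinct [p, q, r, s, t]" "{p, q, r, s, t} \<subseteq> V" "x \<in> V"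
  shows "x \<in> {p, q, r, s, t}"
  using pigeonhole[of "[p, q, r, s, t, x]"] assms by auto

lemma no_dependence_on:
  fixes d :: "'j \<Rightarrow> rat"
  assumes "S \<subseteq> J" and "\<forall>a\<in>V. (\<Sum>j\<in>S. if a \<in> E j then d j else 0) = 0"
    and "j \<in> S" and "d j \<noteq> 0"
  shows False
proof -
  define d' where "d' i = (if i \<in> S then d i else 0)" for i
  have "(\<Sum>i\<in>J. if a \<in> E i then d' i else 0) = 0" if "a \<in> V" for a
  proof -
    have "(\<Sum>i\<in>J. if a \<in> E i then d' i else 0) = (\<Sum>i\<in>S. if a \<in> E i then d i else 0)"
      by (rule sum.mono_neutral_cong_right) (use finite_J assms(1) in \<open>auto simp: d'_def\<close>)
    with assms(2) that show ?thesis by simp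
  qed
  then have "d' j = 0" using indep assms(1,3) by blast
  with assms(3,4) show False by (simp add: d'_def)
qed

lemma E_inj: "inj_on E J"
proof
  fix j k assume jk: "j \<in> J" "k \<in> J" "E j = E k"
  show "j = k"
  proof (rule ccontr)
    assume "j \<noteq> k"
    then show False
      by (intro no_dependence_on[of "{j,k}" "\<lambda>i. if i = j then 1 else -1" j]) (use jk in auto)
  qed
qed

lemma edge_indices:
  assumes "\<forall>i<n. F i \<in> E ` K" and "inj_on F {..<n}"
  obtains j where "\<forall>i<n. j i \<in> K \<and> E (j i) = F i" and "inj_on j {..<n}"
proof -
  have "\<forall>i\<in>{..<n}. \<exists>k. k \<in> K \<and> E k = F i" using assms(1) by force
  then obtain j where j: "\<forall>i<n. j i \<in> K \<and> E (j i) = F i" by (metis lessThan_iff)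
  moreover have "inj_on j {..<n}"
  proof (rule inj_onI)
    fix i i' assume i: "i \<in> {..<n}" "i' \<in> {..<n}" and "j i = j i'"
    then have "F i = F i'" using j by (metis lessThan_iff)
    with assms(2) i show "i = i'" by (auto dest: inj_onD)
  qed
  ultimately show ?thesis by (rule that)
qed

end

locale int_weighted_graph = small_indep_graph +
  fixes c :: "'j \<Rightarrow> rat"
  assumes vertex_int: "\<And>a. a \<in> V \<Longrightarrow> (\<Sum>j\<in>J. if a \<in> E j then c j else 0) \<in> \<int>"
    and total_int: "(\<Sum>j\<in>J. c j) \<in> \<int>"
begin

definition nonint :: "'j set" where "nonint = {j \<in> J. c j \<notin> \<int>}"

definition adj where "adj x y \<longleftrightarrow> {x, y} \<in> E ` nonint"

lemma nonint_sub: "nonint \<subseteq> J" by (auto simp: nonint_def)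

lemma sum_nonint_int:
  assumes "(\<Sum>j\<in>J. g j) \<in> \<int>" and "\<And>j. j \<in> J \<Longrightarrow> c j \<in> \<int> \<Longrightarrow> g j \<in> \<int>"
  shows "(\<Sum>j\<in>nonint. g j) \<in> \<int>"
proof -
  have "(\<Sum>j\<in>J. g j) = (\<Sum>j\<in>J - nonint. g j) + (\<Sum>j\<in>nonint. g j)"
    using sum.subset_diff[OF nonint_sub finite_J] .
  moreover have "(\<Sum>j\<in>J - nonint. g j) \<in> \<int>"
    by (rule Ints_sum) (use assms(2) in \<open>auto simp: nonint_def\<close>)
  ultimately show ?thesis using Ints_diff[OF assms(1)] by (metis add_diff_cancel_left')
qed

lemma nonint_vertex_int: "a \<in> V \<Longrightarrow> (\<Sum>j\<in>nonint. if a \<in> E j then c j else 0) \<in> \<int>"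
  by (rule sum_nonint_int) (simp_all add: vertex_int)

lemma nonint_total_int: "(\<Sum>j\<in>nonint. c j) \<in> \<int>"
  by (rule sum_nonint_int) (simp_all add: total_int)

lemma nonint_edge:
  assumes "e \<in> E ` nonint" obtains x y where "e = {x, y}" "x \<noteq> y" "x \<in> V" "y \<in> V"
proof -
  from assms obtain j where j: "j \<in> nonint" "e = E j" by blast
  then have "e \<subseteq> V" "card e = 2" using edge nonint_sub by auto
  then show ?thesis using that by (auto simp: card_2_iff)
qed

lemma adj_sym: "adj x y \<Longrightarrow> adj y x" by (simp add: adj_def insert_commute)

lemma adj_distinct: "adj x y \<Longrightarrow> x \<noteq> y"
  unfolding adj_def by (erule nonint_edge) (auto simp: doubleton_eq_iff)

lemma adj_V: "adj x y \<Longrightarrow> x \<in> V"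
  unfolding adj_def by (erule nonint_edge) (auto simp: doubleton_eq_iff)

(* No vertex of H has degree one: its single edge would carry the integral vertex sum. *)
lemma no_leaf:
  assumes "adj a x" shows "\<exists>y. adj a y \<and> y \<noteq> x"
proof (rule ccontr)
  assume "\<not> ?thesis"
  then have only_x: "adj a y \<Longrightarrow> y = x" for y by blast
  from assms obtain j0 where j0: "j0 \<in> nonint" "{a, x} = E j0" unfolding adj_def by (rule imageE)
  have unique: "j = j0" if j: "j \<in> nonint" "a \<in> E j" for j
  proof -
    obtain u w where uw: "E j = {u, w}" using nonint_edge j(1) by blast
    define y where "y = (if a = u then w else u)"
    have y: "E j = {a, y}" using uw j(2) by (auto simp: y_def)
    then have "adj a y" using imageI[OF j(1), of E] by (simp add: adj_def)
    then have "E j = E j0" using only_x y j0(2) by simp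
    then show "j = j0" by (rule inj_onD[OF E_inj]) (use nonint_sub j(1) j0(1) in auto)
  qed
  have "(if a \<in> E j then c j else 0) = (if j = j0 then c j else 0)" if "j \<in> nonint" for j
  proof (cases "a \<in> E j")
    case False
    then have "j \<noteq> j0" using j0(2) by auto
    with False show ?thesis by simp
  qed (use unique[OF that] in simp)
  then have "(\<Sum>j\<in>nonint. if a \<in> E j then c j else 0) = (\<Sum>j\<in>nonint. if j = j0 then c j else 0)"
    by (rule sum.cong[OF refl])
  also have "\<dots> = c j0" using j0(1) finite_subset[OF nonint_sub finite_J] by simp
  finally show False using nonint_vertex_int[OF adj_V[OF assms]] j0(1) by (simp add: nonint_def)
qed

lemma cyc_edge_ends:
  assumes "cyc_edge w i \<in> E ` nonint" shows "w ! i \<noteq> w ! (Suc i mod length w)"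
  using assms adj_distinct by (simp add: cyc_edge_def adj_def)

(* An even closed trail in H gives the dependence with alternating signs +1, -1 along it. *)
lemma no_even_closed_trail:
  assumes "even (length w)" and "w \<noteq> []"
    and trail_edges: "cyc_edge w ` {..<length w} \<subseteq> E ` nonint"
    and trail: "inj_on (cyc_edge w) {..<length w}"
  shows False
proof -
  define n where "n = length w"
  have edges: "\<forall>i<length w. cyc_edge w i \<in> E ` nonint" using trail_edges by auto
  obtain j where j: "\<forall>i<n. j i \<in> nonint \<and> E (j i) = cyc_edge w i" and inj: "inj_on j {..<n}"
    using edge_indices[OF edges trail] unfolding n_def by blast
  define d where "d k = (-1 :: rat) ^ inv_into {..<n} j k" for k
  have d_j: "d (j i) = (-1) ^ i" if "i < n" for i
    using inv_into_f_f[OF inj] that by (simp add: d_def)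
  have "(\<Sum>k\<in>j ` {..<n}. if a \<in> E k then d k else 0) = 0" for a
  proof -
    let ?\<chi> = "\<lambda>i. of_bool (a = w ! i) :: rat"
    have "(\<Sum>k\<in>j ` {..<n}. if a \<in> E k then d k else 0)
        = (\<Sum>i<n. if a \<in> cyc_edge w i then (-1) ^ i else 0)"
      by (simp add: sum.reindex[OF inj] j) (intro sum.cong refl, simp add: d_j)
    also have "\<dots> = (\<Sum>i<n. (-1) ^ i * (?\<chi> i + ?\<chi> (Suc i mod n)))"
    proof (intro sum.cong refl)
      fix i assume "i \<in> {..<n}"
      then have "w ! i \<noteq> w ! (Suc i mod n)" using cyc_edge_ends edges by (simp add: n_def)
      then show "(if a \<in> cyc_edge w i then (-1) ^ i else 0) = (-1) ^ i * (?\<chi> i + ?\<chi> (Suc i mod n))"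
        by (auto simp: cyc_edge_def n_def)
    qed
    also have "\<dots> = 0"
      using alternating_sum_rotate[of n ?\<chi>] assms(1)
      by (simp add: distrib_left sum.distrib n_def)
    finally show ?thesis .
  qed
  moreover have "d (j 0) = 1" using d_j[of 0] assms(2) by (simp add: n_def)
  ultimately show False
    using no_dependence_on[of "j ` {..<n}" d "j 0"] j nonint_sub assms(2) by (force simp: n_def)
qed

(* If H is exactly a cycle, then consecutive weights along it sum to integers (the vertex
   sums of H) and so do all of its weights. *)
lemma spanning_cycle_weights:
  assumes "distinct w" "3 \<le> length w"
    and cycle: "E ` nonint = cyc_edge w ` {..<length w}"
  obtains j where "\<forall>i<length w. j i \<in> nonint" and "(\<Sum>i<length w. c (j i)) \<in> \<int>"
    and "\<And>t. t < length w \<Longrightarrow> c (j t) + c (j (Suc t mod length w)) \<in> \<int>"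
proof -
  define n where "n = length w"
  have edges: "\<forall>i<length w. cyc_edge w i \<in> E ` nonint" using cycle by auto
  obtain j where j: "\<forall>i<n. j i \<in> nonint \<and> E (j i) = cyc_edge w i" and inj: "inj_on j {..<n}"
    using edge_indices[OF edges cyc_edge_inj[OF assms(1,2)]] unfolding n_def by blast
  have nonint_eq: "nonint = j ` {..<n}"
  proof
    show "nonint \<subseteq> j ` {..<n}"
    proof
      fix l assume l: "l \<in> nonint"
      have "E l \<in> cyc_edge w ` {..<n}" using imageI[OF l, of E] cycle by (simp add: n_def)
      then obtain i where i: "i < n" "E l = cyc_edge w i" by blast
      then have "l = j i" using j inj_onD[OF E_inj, of l "j i"] nonint_sub l by auto
      with i show "l \<in> j ` {..<n}" by blast
    qed
  qed (use j in auto)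
  have sum_nonint: "(\<Sum>l\<in>nonint. g l) = (\<Sum>i<n. g (j i))" for g :: "'j \<Rightarrow> rat"
    unfolding nonint_eq by (rule sum.reindex[OF inj, unfolded comp_def])
  have pair: "c (j t) + c (j (Suc t mod n)) \<in> \<int>" if t: "t < n" for t
  proof -
    define a where "a = w ! (Suc t mod n)"
    have "adj (w ! t) a" using edges t by (simp add: cyc_edge_def a_def n_def adj_def)
    then have "a \<in> V" using adj_V adj_sym by blast
    have ne: "Suc t mod n \<noteq> t" using t assms(2) by (simp add: mod_Suc n_def)
    have "Suc t mod n < n" using t by simp
    have "(\<Sum>l\<in>nonint. if a \<in> E l then c l else 0) = (\<Sum>i<n. if a \<in> cyc_edge w i then c (j i) else 0)"
      unfolding sum_nonint using j by (intro sum.cong refl) simp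
    also have "\<dots> = (\<Sum>i<n. (if i = t then c (j i) else 0) + (if i = Suc t mod n then c (j i) else 0))"
      using cyc_edge_mem[OF assms(1) _ t[unfolded n_def]] ne
      by (intro sum.cong refl) (auto simp: a_def n_def)
    also have "\<dots> = c (j t) + c (j (Suc t mod n))"
      using t \<open>Suc t mod n < n\<close> by (simp add: sum.distrib)
    finally show ?thesis using nonint_vertex_int[OF \<open>a \<in> V\<close>] by simp
  qed
  have "(\<Sum>i<n. c (j i)) \<in> \<int>" using nonint_total_int by (simp add: sum_nonint)
  with j pair show thesis using that unfolding n_def by blast
qed

lemma no_odd_cycle_spanning:
  assumes "odd (length w)" and "distinct w"
    and cycle: "E ` nonint = cyc_edge w ` {..<length w}"
  shows False
proof -
  obtain k where k: "length w = 2 * k + 1" using assms(1) oddE by blast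
  have "k \<noteq> 0"
  proof
    assume "k = 0"
    then have "w ! 0 = w ! (Suc 0 mod length w)" using k by simp
    moreover have "cyc_edge w 0 \<in> E ` nonint" using cycle k by auto
    ultimately show False using cyc_edge_ends[of w 0] by simp
  qed
  then have "3 \<le> length w" using k by simp
  then obtain j where j: "\<forall>i<length w. j i \<in> nonint" and "(\<Sum>i<length w. c (j i)) \<in> \<int>"
    and "\<And>t. t < length w \<Longrightarrow> c (j t) + c (j (Suc t mod length w)) \<in> \<int>"
    using spanning_cycle_weights[OF assms(2) _ cycle] by blast
  then have "c (j 0) \<in> \<int>" using odd_cycle_integral[OF k, of "\<lambda>i. c (j i)"] by blast
  moreover have "j 0 \<in> nonint" using j k by simp
  ultimately show False by (simp add: nonint_def)
qed

(* Two instances of even closed trails: a 4-cycle and two triangles sharing a vertex. *)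
lemma no_4_cycle:
  assumes "distinct [p, q, r, s]" "adj p q" "adj q r" "adj r s" "adj s p"
  shows False
proof (rule no_even_closed_trail[of "[p, q, r, s]"])
  show "inj_on (cyc_edge [p, q, r, s]) {..<length [p, q, r, s]}"
    using cyc_edge_inj[OF assms(1)] by simp
  show "cyc_edge [p, q, r, s] ` {..<length [p, q, r, s]} \<subseteq> E ` nonint"
    using assms(2-5) by (simp add: cyc_edge_def lessThan_Suc adj_def)
qed simp_all

lemma no_bowtie:
  assumes "distinct [p, q, r, s, t]" "adj p q" "adj q r" "adj r p" "adj r s" "adj s t" "adj t r"
  shows False
proof (rule no_even_closed_trail[of "[p, q, r, s, t, r]"])
  show "inj_on (cyc_edge [p, q, r, s, t, r]) {..<length [p, q, r, s, t, r]}"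
    using assms(1) by (auto simp: cyc_edge_def lessThan_Suc doubleton_eq_iff)
  show "cyc_edge [p, q, r, s, t, r] ` {..<length [p, q, r, s, t, r]} \<subseteq> E ` nonint"
    using assms(2-7) by (simp add: cyc_edge_def lessThan_Suc adj_def)
qed simp_all

lemma triangle_at:
  assumes "distinct [p, q, r]" "adj p q" "adj q r" "adj r p" "z \<in> {p, q, r}"
  obtains u v where "distinct [u, v, z]" "adj u v" "adj v z" "adj z u" "{u, v, z} = {p, q, r}"
proof -
  consider "z = p" | "z = q" | "z = r" using assms(5) by blast
  then show thesis
  proof cases
    case 1 then show thesis using that[of q r] assms(1-4) by (auto simp: insert_commute)
  next
    case 2 then show thesis using that[of r p] assms(1-4) by (auto simp: insert_commute)
  next
    case 3 then show thesis using that[of p q] assms(1-4) by auto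
  qed
qed

(* A vertex outside a triangle of H is adjacent to at most one of its vertices, since two
   such edges would close a 4-cycle through the third vertex. *)
lemma triangle_one_neighbour:
  assumes "distinct [p, q, r]" "adj p q" "adj q r" "adj r p" "s \<notin> {p, q, r}"
    and x: "adj s x" "adj s x'" "x \<in> {p, q, r}" "x' \<in> {p, q, r}"
  shows "x = x'"
proof (rule ccontr)
  assume "x \<noteq> x'"
  obtain u v where uv: "distinct [u, v, x]" "adj u v" "adj v x" "adj x u" "{u, v, x} = {p, q, r}"
    using triangle_at[OF assms(1-4) x(3)] .
  show False
  proof (cases "x' = u")
    case True
    then show False using no_4_cycle[of x s u v] uv x assms(5) adj_sym by auto
  next
    case False
    then have "x' = v" using uv x(4) \<open>x \<noteq> x'\<close> by auto
    then show False using no_4_cycle[of x s v u] uv x assms(5) adj_sym by auto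
  qed
qed

(* No edge of H leaves a triangle of H: an outside vertex s has two neighbours, hence a
   neighbour e outside the triangle; by the pigeonhole principle the other neighbours of s and
   e lie on the triangle, which gives a bowtie or a 4-cycle. *)
lemma triangle_isolated:
  assumes "distinct [p, q, r]" "adj p q" "adj q r" "adj r p" "adj s y" "s \<notin> {p, q, r}"
  shows False
proof -
  have V: "{p, q, r} \<subseteq> V" "s \<in> V" using assms(2-5) adj_V adj_sym by auto
  note at_most_one = triangle_one_neighbour[OF assms(1-4,6)]
  obtain y' where y': "adj s y'" "y' \<noteq> y" using no_leaf[OF assms(5)] by blast
  obtain e where e: "adj s e" "e \<notin> {p, q, r}"
    using at_most_one[OF assms(5) y'(1)] y' assms(5) by blast
  have "e \<noteq> s" using adj_distinct e(1) by blast
  have dist5: "distinct [p, q, r, s, e]" using assms(1,6) e(2) \<open>e \<noteq> s\<close> by auto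
  have V5: "{p, q, r, s, e} \<subseteq> V" using V adj_V adj_sym e(1) by auto
  have back_to_triangle: "z \<in> {p, q, r}" if "adj x z" "z \<noteq> x'" "{x, x'} = {s, e}" for x x' z
    using five_vertices[OF dist5 V5 adj_V[OF adj_sym[OF that(1)]]] that adj_distinct[OF that(1)] by auto
  obtain z where z: "adj e z" "z \<noteq> s" using no_leaf[OF adj_sym[OF e(1)]] by blast
  obtain z' where z': "adj s z'" "z' \<noteq> e" using no_leaf[OF e(1)] by blast
  have zT: "z \<in> {p, q, r}" using back_to_triangle[OF z] by (simp add: insert_commute)
  have z'T: "z' \<in> {p, q, r}" using back_to_triangle[OF z'] by simp
  obtain u v where uv: "distinct [u, v, z]" "adj u v" "adj v z" "adj z u" "{u, v, z} = {p, q, r}"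
    using triangle_at[OF assms(1-4) zT] .
  show False
  proof (cases "z' = z")
    case True
    then show False
      using no_bowtie[of u v z s e] uv z z' e adj_sym assms(6) \<open>e \<noteq> s\<close> by auto
  next
    case False
    then have "z' \<in> {u, v}" using uv(5) z'T by auto
    then have "adj z z'" using uv(3,4) adj_sym by auto
    then show False
      using no_4_cycle[of z' s e z] z z' e assms(6) False \<open>e \<noteq> s\<close> zT z'T adj_sym by auto
  qed
qed

lemma adj_edge:
  assumes "e \<in> E ` nonint" obtains x y where "e = {x, y}" "adj x y"
proof -
  obtain x y where "e = {x, y}" using nonint_edge[OF assms] by blast
  moreover from this have "adj x y" using assms by (simp add: adj_def)
  ultimately show thesis by (rule that)
qed

(* Hence H contains no triangle: it would be all of H. *)
lemma no_triangle:
  assumes "distinct [p, q, r]" "adj p q" "adj q r" "adj r p"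
  shows False
proof (rule no_odd_cycle_spanning[of "[p, q, r]"])
  have "E ` nonint \<subseteq> {{p, q}, {q, r}, {r, p}}"
  proof
    fix e assume e: "e \<in> E ` nonint"
    obtain x y where xy: "e = {x, y}" "adj x y" using adj_edge[OF e] by blast
    have "x \<in> {p, q, r}" "y \<in> {p, q, r}"
      using triangle_isolated[OF assms] xy(2) adj_sym by blast+
    then show "e \<in> {{p, q}, {q, r}, {r, p}}" using xy adj_distinct[OF xy(2)]
      by (elim insertE emptyE) (simp_all add: insert_commute)
  qed
  moreover have "{{p, q}, {q, r}, {r, p}} \<subseteq> E ` nonint" using assms(2-4) by (simp add: adj_def)
  moreover have "cyc_edge [p, q, r] ` {..<length [p, q, r]} = {{p, q}, {q, r}, {r, p}}"
    by (simp add: cyc_edge_def lessThan_Suc insert_commute)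
  ultimately show "E ` nonint = cyc_edge [p, q, r] ` {..<length [p, q, r]}" by (simp only: subset_antisym)
qed (use assms(1) in simp_all)

(* Nor a 5-cycle: every further edge is a chord (five vertices at most), creating a
   triangle. *)
lemma no_pentagon:
  assumes "distinct [p, q, r, s, t]" "adj p q" "adj q r" "adj r s" "adj s t" "adj t p"
  shows False
proof (rule no_odd_cycle_spanning[of "[p, q, r, s, t]"])
  have V5: "{p, q, r, s, t} \<subseteq> V" using assms(2-6) adj_V by auto
  have no_chord: "\<not> adj p r" "\<not> adj q s" "\<not> adj r t" "\<not> adj s p" "\<not> adj t q"
    using no_triangle[of p q r] no_triangle[of q r s] no_triangle[of r s t]
      no_triangle[of s t p] no_triangle[of t p q] assms adj_sym by auto
  then have no_chord': "\<not> adj r p" "\<not> adj s q" "\<not> adj t r" "\<not> adj p s" "\<not> adj q t"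
    using adj_sym by blast+
  have "E ` nonint \<subseteq> {{p, q}, {q, r}, {r, s}, {s, t}, {t, p}}"
  proof
    fix e assume e: "e \<in> E ` nonint"
    obtain x y where xy: "e = {x, y}" "adj x y" using adj_edge[OF e] by blast
    have "x \<in> {p, q, r, s, t}" "y \<in> {p, q, r, s, t}"
      using five_vertices[OF assms(1) V5] adj_V xy(2) adj_sym by blast+
    then show "e \<in> {{p, q}, {q, r}, {r, s}, {s, t}, {t, p}}"
      using xy no_chord no_chord' adj_distinct[OF xy(2)]
      by (elim insertE emptyE) (simp_all add: insert_commute)
  qed
  moreover have "{{p, q}, {q, r}, {r, s}, {s, t}, {t, p}} \<subseteq> E ` nonint"
    using assms(2-6) by (simp add: adj_def)
  moreover have "cyc_edge [p, q, r, s, t] ` {..<length [p, q, r, s, t]}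
      = {{p, q}, {q, r}, {r, s}, {s, t}, {t, p}}"
    by (simp add: cyc_edge_def lessThan_Suc insert_commute)
  ultimately show "E ` nonint = cyc_edge [p, q, r, s, t] ` {..<length [p, q, r, s, t]}"
    by (simp only: subset_antisym)
qed (use assms(1) in simp_all)

(* Following a walk in H without turning back, a triangle, 4-cycle or 5-cycle appears within
   five steps, since only five vertices are available. *)
lemma nonint_empty: "nonint = {}"
proof (rule ccontr)
  assume "nonint \<noteq> {}"
  then obtain u0 u1 where "adj u0 u1" using adj_edge by blast
  obtain u2 where u2: "adj u1 u2" "u2 \<noteq> u0" using no_leaf[OF adj_sym] \<open>adj u0 u1\<close> by blast
  obtain u3 where u3: "adj u2 u3" "u3 \<noteq> u1" using no_leaf[OF adj_sym[OF u2(1)]] by blast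
  have "u3 \<noteq> u0"
    using no_triangle[of u0 u1 u2] \<open>adj u0 u1\<close> u2 u3 adj_distinct adj_sym by auto
  obtain u4 where u4: "adj u3 u4" "u4 \<noteq> u2" using no_leaf[OF adj_sym[OF u3(1)]] by blast
  have "u4 \<noteq> u0"
    using no_4_cycle[of u0 u1 u2 u3] \<open>adj u0 u1\<close> u2 u3 u4 \<open>u3 \<noteq> u0\<close> adj_distinct by auto
  have "u4 \<noteq> u1"
    using no_triangle[of u1 u2 u3] u2 u3 u4 adj_distinct adj_sym by auto
  obtain u5 where u5: "adj u4 u5" "u5 \<noteq> u3" using no_leaf[OF adj_sym[OF u4(1)]] by blast
  have "u5 \<noteq> u0"
    using no_pentagon[of u0 u1 u2 u3 u4] \<open>adj u0 u1\<close> u2 u3 u4 u5 \<open>u3 \<noteq> u0\<close> \<open>u4 \<noteq> u0\<close>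
      \<open>u4 \<noteq> u1\<close> adj_distinct by auto
  have "u5 \<noteq> u1"
    using no_4_cycle[of u1 u2 u3 u4] u2 u3 u4 u5 \<open>u4 \<noteq> u1\<close> adj_distinct by auto
  have "u5 \<noteq> u2"
    using no_triangle[of u2 u3 u4] u3 u4 u5 adj_distinct adj_sym by auto
  have "distinct [u0, u1, u2, u3, u4, u5]"
    using \<open>adj u0 u1\<close> u2 u3 u4 u5 \<open>u3 \<noteq> u0\<close> \<open>u4 \<noteq> u0\<close> \<open>u4 \<noteq> u1\<close> \<open>u5 \<noteq> u0\<close>
      \<open>u5 \<noteq> u1\<close> \<open>u5 \<noteq> u2\<close> adj_distinct by auto
  moreover have "set [u0, u1, u2, u3, u4, u5] \<subseteq> V"
    using adj_V[OF \<open>adj u0 u1\<close>] adj_V[OF u2(1)] adj_V[OF u3(1)] adj_V[OF u4(1)]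
      adj_V[OF u5(1)] adj_V[OF adj_sym[OF u5(1)]] by simp
  ultimately have "length [u0, u1, u2, u3, u4, u5] \<le> 5" by (rule pigeonhole)
  then show False by simp
qed

theorem weights_integral: "j \<in> J \<Longrightarrow> c j \<in> \<int>"
  using nonint_empty by (auto simp: nonint_def)

end

section \<open>The vectors e_p + e_q + e_r and the lattice Z3\<close>

definition tvec :: "nat set \<Rightarrow> nat \<Rightarrow> rat" where
  "tvec T k = (if k \<in> {1..6} then of_bool (k \<in> T) - 1/2 else 0)"

definition tsign :: "nat set \<Rightarrow> rat" where
  "tsign T = (if 6 \<in> T then 1 else -1)"

definition tedge :: "nat set \<Rightarrow> nat set" where
  "tedge T = (if 6 \<in> T then T - {6} else {1..5} - T)"

lemma triples_tvec:
  assumes "v \<in> triples"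
  obtains T where "T \<subseteq> {1..6}" "card T = 3" "v = tvec T"
proof -
  from assms obtain p q r where pqr: "1 \<le> p" "p < q" "q < r" "r \<le> 6"
    and v: "v = (\<lambda>x. eps p x + eps q x + eps r x)" unfolding triples_def by blast
  have "v = tvec {p, q, r}" using pqr unfolding v by (auto simp: fun_eq_iff eps_def tvec_def)
  moreover have "{p, q, r} \<subseteq> {1..6}" "card {p, q, r} = 3" using pqr by auto
  ultimately show thesis using that by blast
qed

lemma tvec_outside: "k \<notin> {1..6} \<Longrightarrow> tvec T k = 0"
  by (simp add: tvec_def)

lemma tvec_pair: "a \<in> {1..5} \<Longrightarrow> tvec T a + tvec T 6 = (if a \<in> tedge T then tsign T else 0)"
  by (auto simp: tvec_def tsign_def tedge_def)

lemma tvec_six: "2 * tvec T 6 = tsign T"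
  by (simp add: tvec_def tsign_def)

lemma tvec_sum:
  assumes "T \<subseteq> {1..6}" "card T = 3"
  shows "(\<Sum>k\<in>{1..6}. tvec T k) = 0"
proof -
  have "(\<Sum>k\<in>{1..6}. tvec T k) = (\<Sum>k\<in>{1..6}. of_bool (k \<in> T)) - 6 * (1/2 :: rat)"
    by (simp add: tvec_def sum_subtractf)
  also have "(\<Sum>k\<in>{1..6::nat}. of_bool (k \<in> T) :: rat) = of_nat (card T)"
    using assms(1) by (simp add: Int_absorb1)
  finally show ?thesis using assms(2) by simp
qed

lemma tedge_edge:
  assumes "T \<subseteq> {1..6}" "card T = 3"
  shows "tedge T \<subseteq> {1..5} \<and> card (tedge T) = 2"
proof (cases "6 \<in> T")
  case True
  then show ?thesis using assms by (auto simp: tedge_def card_Diff_singleton)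
next
  case False
  have "T \<subseteq> {1..5}"
  proof
    fix t assume "t \<in> T"
    then have "t \<in> {1..6}" "t \<noteq> 6" using assms(1) False by auto
    then show "t \<in> {1..5}" by auto
  qed
  then show ?thesis using False assms(2) by (simp add: tedge_def card_Diff_subset finite_subset)
qed

lemma tsign_square: "tsign T * tsign T = 1"
  by (simp add: tsign_def)

lemma tsign_int: "tsign T \<in> \<int>"
  by (simp add: tsign_def)

lemma tsign_nonzero: "tsign T \<noteq> 0"
  by (simp add: tsign_def)

lemma eps_combination:
  fixes a :: "nat \<Rightarrow> int"
  shows "(\<Sum>i\<in>{1..6}. of_int (a i) * eps i k)
    = (if k \<in> {1..6} then of_int (a k) - of_int (\<Sum>i\<in>{1..6}. a i) / 6 else 0)"
proof (cases "k \<in> {1..6}")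
  case True
  then have "(\<Sum>i\<in>{1..6}. of_int (a i) * eps i k)
      = (\<Sum>i\<in>{1..6}. (if i = k then of_int (a i) else 0) - of_int (a i) / 6)"
    by (intro sum.cong) (auto simp: eps_def)
  also have "\<dots> = of_int (a k) - of_int (\<Sum>i\<in>{1..6}. a i) / 6"
    using True by (simp add: sum_subtractf sum_divide_distrib)
  finally show ?thesis using True by simp
next
  case False
  then have "eps i k = 0" for i by (auto simp: eps_def)
  with False show ?thesis by auto
qed

definition Z3_coords :: "(nat \<Rightarrow> rat) \<Rightarrow> bool" where
  "Z3_coords x \<longleftrightarrow> (\<forall>k. k \<notin> {1..6} \<longrightarrow> x k = 0) \<and> (\<Sum>k\<in>{1..6}. x k) = 0
     \<and> 2 * x 6 \<in> \<int> \<and> (\<forall>a\<in>{1..5}. x a + x 6 \<in> \<int>)"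

(* An element x = sum a_i e_i with sum a_i = 3 t has coordinates x_k = a_k - t/2. *)
lemma Z3_coordsI:
  assumes "x \<in> Z3" shows "Z3_coords x"
proof -
  from assms obtain a :: "nat \<Rightarrow> int" where x: "x = (\<lambda>k. \<Sum>i\<in>{1..6}. of_int (a i) * eps i k)"
    and "(\<Sum>i\<in>{1..6}. a i) mod 3 = 0" unfolding Z3_def mem_Collect_eq by (elim exE conjE)
  then obtain t where t: "(\<Sum>i\<in>{1..6}. a i) = 3 * t" by (metis dvd_def mod_0_imp_dvd)
  have xk: "x k = (if k \<in> {1..6} then of_int (a k) - of_int t / 2 else 0)" for k
    unfolding x eps_combination t by simp
  have "(\<Sum>k\<in>{1..6}. x k) = of_int (\<Sum>i\<in>{1..6}. a i) - 6 * (of_int t / 2)"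
    by (simp add: xk sum_subtractf)
  then have "(\<Sum>k\<in>{1..6}. x k) = 0" unfolding t by simp
  moreover have "2 * x 6 = of_int (2 * a 6 - t)" by (simp add: xk)
  moreover have "x b + x 6 = of_int (a b + a 6 - t)" if "b \<in> {1..5}" for b
    using that by (simp add: xk)
  ultimately show "Z3_coords x" unfolding Z3_coords_def by (simp add: xk)
qed

(* Conversely, x = sum a_i e_i for the integers a_k = x_k + x_6, whose sum is 3 (2 x_6). *)
lemma Z3I:
  assumes "Z3_coords x" shows "x \<in> Z3"
proof -
  from assms have out: "\<And>k. k \<notin> {1..6} \<Longrightarrow> x k = 0" and sum0: "(\<Sum>k\<in>{1..6}. x k) = 0"
    and six: "2 * x 6 \<in> \<int>" and pairs: "\<And>b. b \<in> {1..5} \<Longrightarrow> x b + x 6 \<in> \<int>"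
    unfolding Z3_coords_def by blast+
  define a where "a k = \<lfloor>x k + x 6\<rfloor>" for k
  have a: "of_int (a k) = x k + x 6" if "k \<in> {1..6}" for k
  proof (cases "k = 6")
    case False
    with that have "k \<in> {1..5}" by auto
    then show ?thesis using pairs by (simp add: a_def)
  next
    case True
    have "x 6 + x 6 = 2 * x 6" by simp
    then show ?thesis using True six by (simp add: a_def)
  qed
  have "of_int (\<Sum>i\<in>{1..6}. a i) = (\<Sum>i\<in>{1..6::nat}. x i + x 6)" by (simp add: a)
  also have "\<dots> = of_int (3 * \<lfloor>2 * x 6\<rfloor>)" using six sum0 by (simp add: sum.distrib)
  finally have sum_a: "(\<Sum>i\<in>{1..6}. a i) = 3 * \<lfloor>2 * x 6\<rfloor>" by (simp only: of_int_eq_iff)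
  have "x k = (\<Sum>i\<in>{1..6}. of_int (a i) * eps i k)" for k
  proof (cases "k \<in> {1..6}")
    case True
    then show ?thesis using six unfolding eps_combination sum_a by (simp add: a[OF True])
  next
    case False
    then show ?thesis unfolding eps_combination using out by auto
  qed
  moreover have "(\<Sum>i\<in>{1..6}. a i) mod 3 = 0" unfolding sum_a by simp
  ultimately show "x \<in> Z3" unfolding Z3_def mem_Collect_eq by (intro exI[of _ a] conjI ext)
qed

lemma Z3_iff: "x \<in> Z3 \<longleftrightarrow> Z3_coords x"
  using Z3_coordsI Z3I by blast

lemma coords_vanish:
  fixes z :: "nat \<Rightarrow> rat"
  assumes "\<forall>k. k \<notin> {1..6} \<longrightarrow> z k = 0" and "(\<Sum>k\<in>{1..6}. z k) = 0"
    and "\<forall>a\<in>{1..5}. z a + z 6 = 0"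
  shows "z = (\<lambda>_. 0)"
proof -
  have six: "{1..6::nat} = {1, 2, 3, 4, 5, 6}" by auto
  have "z a = - z 6" if "a \<in> {1..5}" for a using assms(3) that by (simp add: eq_neg_iff_add_eq_0)
  then have "z 1 = - z 6" "z 2 = - z 6" "z 3 = - z 6" "z 4 = - z 6" "z 5 = - z 6" by auto
  with assms(2) have z6: "z 6 = 0" unfolding six by simp
  show ?thesis
  proof
    fix k show "z k = 0"
    proof (cases "k \<in> {1..5}")
      case True then show ?thesis using assms(3) z6 by auto
    next
      case False then have "k = 6 \<or> k \<notin> {1..6}" by auto
      then show ?thesis using assms(1) z6 by auto
    qed
  qed
qed

locale triple_family =
  fixes v :: "nat \<Rightarrow> nat \<Rightarrow> rat" and m :: nat and T :: "nat \<Rightarrow> nat set"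
  assumes v_tvec: "j < m \<Longrightarrow> v j = tvec (T j)"
    and T_sub: "j < m \<Longrightarrow> T j \<subseteq> {1..6}"
    and T_card: "j < m \<Longrightarrow> card (T j) = 3"
begin

lemma lincomb_outside: "k \<notin> {1..6} \<Longrightarrow> lincomb c v m k = 0"
  unfolding lincomb_def by (intro sum.neutral) (simp add: v_tvec tvec_outside)

lemma lincomb_sum: "(\<Sum>k\<in>{1..6}. lincomb c v m k) = 0"
proof -
  have "(\<Sum>k\<in>{1..6}. lincomb c v m k) = (\<Sum>j<m. \<Sum>k\<in>{1..6}. c j * v j k)"
    unfolding lincomb_def by (rule sum.swap)
  also have "\<dots> = (\<Sum>j<m. c j * (\<Sum>k\<in>{1..6}. tvec (T j) k))"
    by (intro sum.cong refl) (simp add: sum_distrib_left v_tvec)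
  also have "\<dots> = 0"
  proof (intro sum.neutral ballI)
    fix j assume "j \<in> {..<m}"
    then have "(\<Sum>k\<in>{1..6}. tvec (T j) k) = 0" using tvec_sum T_sub T_card by simp
    then show "c j * (\<Sum>k\<in>{1..6}. tvec (T j) k) = 0" by simp
  qed
  finally show ?thesis .
qed

lemma lincomb_pair:
  assumes "a \<in> {1..5}"
  shows "lincomb c v m a + lincomb c v m 6
    = (\<Sum>j<m. if a \<in> tedge (T j) then tsign (T j) * c j else 0)"
proof -
  have "lincomb c v m a + lincomb c v m 6 = (\<Sum>j<m. c j * (tvec (T j) a + tvec (T j) 6))"
    unfolding lincomb_def sum.distrib[symmetric] distrib_left
    by (intro sum.cong refl) (simp add: v_tvec)
  also have "\<dots> = (\<Sum>j<m. if a \<in> tedge (T j) then tsign (T j) * c j else 0)"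
    using assms by (intro sum.cong refl) (simp add: tvec_pair mult.commute)
  finally show ?thesis .
qed

lemma lincomb_six: "2 * lincomb c v m 6 = (\<Sum>j<m. tsign (T j) * c j)"
  unfolding lincomb_def sum_distrib_left
proof (intro sum.cong refl)
  fix j assume "j \<in> {..<m}"
  then show "2 * (c j * v j 6) = tsign (T j) * c j"
    using tvec_six[of "T j"] by (simp add: v_tvec)
qed

lemma lincomb_Z3_coords:
  assumes "\<And>j. j < m \<Longrightarrow> c j \<in> \<int>"
  shows "Z3_coords (lincomb c v m)"
  unfolding Z3_coords_def
proof (intro conjI ballI allI impI)
  show "2 * lincomb c v m 6 \<in> \<int>"
    unfolding lincomb_six using assms tsign_int by (intro Ints_sum Ints_mult) auto
  show "lincomb c v m a + lincomb c v m 6 \<in> \<int>" if "a \<in> {1..5}" for a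
    unfolding lincomb_pair[OF that] using assms tsign_int by (intro Ints_sum) auto
qed (use lincomb_outside lincomb_sum in simp_all)

(* Independence of the triple vectors gives independence of the associated signed edges:
   a dependence among the edges comes from a combination z with all z_a + z_6 = 0. *)
lemma edge_graph:
  assumes "lin_indep v m"
  shows "small_indep_graph {1..5} {..<m} (\<lambda>j. tedge (T j))"
proof
  show "tedge (T j) \<subseteq> {1..5} \<and> card (tedge (T j)) = 2" if "j \<in> {..<m}" for j
    using that tedge_edge T_sub T_card by simp
next
  fix d :: "nat \<Rightarrow> rat"
  assume d: "\<forall>a\<in>{1..5}. (\<Sum>j\<in>{..<m}. if a \<in> tedge (T j) then d j else 0) = 0"
  define z where "z = lincomb (\<lambda>j. tsign (T j) * d j) v m"
  have "z a + z 6 = 0" if "a \<in> {1..5}" for a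
  proof -
    have "z a + z 6 = (\<Sum>j<m. if a \<in> tedge (T j) then d j else 0)"
      unfolding z_def lincomb_pair[OF that]
      by (intro sum.cong refl) (simp add: mult.assoc[symmetric] tsign_square)
    with d that show ?thesis by simp
  qed
  then have "z = (\<lambda>_. 0)"
    unfolding z_def by (intro coords_vanish) (use lincomb_outside lincomb_sum in simp_all)
  then have "\<forall>j<m. tsign (T j) * d j = 0"
    using assms unfolding lin_indep_def z_def by blast
  then show "\<forall>j\<in>{..<m}. d j = 0" using tsign_nonzero by simp
qed simp_all

(* A rational combination in Z3 has integral coefficients: the signed coefficients are edge
   weights as in int_weighted_graph. *)
lemma coefficients_integral:
  assumes "lin_indep v m" and "Z3_coords (lincomb c v m)" and "j < m"
  shows "c j \<in> \<int>"
proof -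
  let ?E = "\<lambda>j. tedge (T j)" and ?d = "\<lambda>j. tsign (T j) * c j"
  have "int_weighted_graph {1..5} {..<m} ?E ?d"
  proof (intro int_weighted_graph.intro int_weighted_graph_axioms.intro edge_graph[OF assms(1)])
    show "(\<Sum>j\<in>{..<m}. if a \<in> ?E j then ?d j else 0) \<in> \<int>" if "a \<in> {1..5}" for a
      using assms(2) that unfolding lincomb_pair[OF that, symmetric] Z3_coords_def by simp
    show "(\<Sum>j\<in>{..<m}. ?d j) \<in> \<int>"
      using assms(2) unfolding lincomb_six[symmetric] Z3_coords_def by simp
  qed
  then have "?d j \<in> \<int>" by (rule int_weighted_graph.weights_integral) (use assms(3) in simp)
  then have "tsign (T j) * ?d j \<in> \<int>" using tsign_int by (rule Ints_mult[rotated])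
  then show ?thesis by (simp add: mult.assoc[symmetric] tsign_square)
qed

lemma int_span_subset: "int_span v m \<subseteq> rat_span v m \<inter> Z3"
proof
  fix x assume "x \<in> int_span v m"
  then obtain c :: "nat \<Rightarrow> int" where x: "x = lincomb (\<lambda>j. of_int (c j)) v m"
    unfolding int_span_def by blast
  then have "x \<in> rat_span v m" unfolding rat_span_def by blast
  moreover have "x \<in> Z3" unfolding x Z3_iff by (rule lincomb_Z3_coords) simp
  ultimately show "x \<in> rat_span v m \<inter> Z3" by blast
qed

lemma Z3_subset:
  assumes "lin_indep v m"
  shows "rat_span v m \<inter> Z3 \<subseteq> int_span v m"
proof
  fix x assume "x \<in> rat_span v m \<inter> Z3"
  then have "x \<in> rat_span v m" and coords: "Z3_coords x" by (simp_all add: Z3_iff)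
  then obtain c where x: "x = lincomb c v m" unfolding rat_span_def by blast
  have c: "c j \<in> \<int>" if "j < m" for j
    using coefficients_integral[OF assms _ that] coords x by simp
  have "x = lincomb (\<lambda>j. of_int \<lfloor>c j\<rfloor>) v m"
    unfolding x lincomb_def using c by (intro ext sum.cong refl) simp
  then show "x \<in> int_span v m"
    unfolding int_span_def by (intro CollectI exI[of _ "\<lambda>j. \<lfloor>c j\<rfloor>"]) simp
qed

end

theorem lemma3:
  fixes v :: "nat \<Rightarrow> nat \<Rightarrow> rat" and m :: nat
  assumes "\<forall>j<m. v j \<in> triples"
    and "lin_indep v m"
  shows "int_span v m = rat_span v m \<inter> Z3"
proof -
  have "\<forall>j<m. \<exists>T. T \<subseteq> {1..6} \<and> card T = 3 \<and> v j = tvec T"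
    using assms(1) triples_tvec by metis
  then obtain T where "\<forall>j<m. T j \<subseteq> {1..6} \<and> card (T j) = 3 \<and> v j = tvec (T j)"
    by metis
  then interpret triple_family v m T by unfold_locales auto
  show ?thesis using int_span_subset Z3_subset[OF assms(2)] by (rule subset_antisym)
qed

end
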